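(* Let $P$ satisfy (S1)–(S4). If $\bar h\in H$ has support of size at least $4$, then $\bar h$ is a $[\pm,t]$-commutator.
   Context: Conditions on a finite group $P$: (S1) for all $a_1,a_2\in P$ there are $x,y$ with $a_2=x^{-1}a_1^{-1}yxy^{-1}$; (S2) for all $a_1,a_2,a_3$ there are $u,v$ with $a_2=a_3ua_1^{-1}a_3^{-1}vu^{-1}v^{-1}$; (S3) for all $u_1,u_2,u_3,u_4\ne1$ there are $x,y,z$ with $u_4=x^{-1}u_1xy^{-1}u_2yz^{-1}u_3z$; (S4) there are $u_1,u_2,u_3\ne1$ such that there are no $x,y$ with $u_3=x^{-1}u_2^{-1}xy^{-1}u_1^{-1}y$. $H=\bigoplus_{i\in\mathbb Z}H_i$, each $H_i$ a copy of $P$, elements finitely supported sequences $(h_i)_{i\in\mathbb Z}$; the support of $\bar h$ is $\{i:h_i\ne1\}$. $\alpha((h_i)_i)=(h_{i+1})_i$. $\bar h\in H$ is a $[\pm,t]$-commutator if $\bar h=\bar g_1\alpha(\bar g_1^{-1})\alpha(\bar g_2)\bar g_2^{-1}$ or $\bar h=\alpha(\bar g_1)\bar g_1^{-1}\bar g_2\alpha(\bar g_2^{-1})$ for some $\bar g_1,\bar g_2\in H$. *)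

theory Defs
  imports "HOL-Algebra.Group"
begin

definition S1 :: "('a, 'b) monoid_scheme \<Rightarrow> bool" where
  "S1 G \<longleftrightarrow> (\<forall>a1\<in>carrier G. \<forall>a2\<in>carrier G. \<exists>x\<in>carrier G. \<exists>y\<in>carrier G.
     a2 = inv\<^bsub>G\<^esub> x \<otimes>\<^bsub>G\<^esub> inv\<^bsub>G\<^esub> a1 \<otimes>\<^bsub>G\<^esub> y \<otimes>\<^bsub>G\<^esub> x \<otimes>\<^bsub>G\<^esub> inv\<^bsub>G\<^esub> y)"

definition S2 :: "('a, 'b) monoid_scheme \<Rightarrow> bool" where
  "S2 G \<longleftrightarrow> (\<forall>a1\<in>carrier G. \<forall>a2\<in>carrier G. \<forall>a3\<in>carrier G. \<exists>u\<in>carrier G. \<exists>v\<in>carrier G.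
     a2 = a3 \<otimes>\<^bsub>G\<^esub> u \<otimes>\<^bsub>G\<^esub> inv\<^bsub>G\<^esub> a1 \<otimes>\<^bsub>G\<^esub> inv\<^bsub>G\<^esub> a3 \<otimes>\<^bsub>G\<^esub> v
          \<otimes>\<^bsub>G\<^esub> inv\<^bsub>G\<^esub> u \<otimes>\<^bsub>G\<^esub> inv\<^bsub>G\<^esub> v)"

definition S3 :: "('a, 'b) monoid_scheme \<Rightarrow> bool" where
  "S3 G \<longleftrightarrow> (\<forall>u1\<in>carrier G. \<forall>u2\<in>carrier G. \<forall>u3\<in>carrier G. \<forall>u4\<in>carrier G.
     u1 \<noteq> \<one>\<^bsub>G\<^esub> \<longrightarrow> u2 \<noteq> \<one>\<^bsub>G\<^esub> \<longrightarrow> u3 \<noteq> \<one>\<^bsub>G\<^esub> \<longrightarrow> u4 \<noteq> \<one>\<^bsub>G\<^esub> \<longrightarrow>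
     (\<exists>x\<in>carrier G. \<exists>y\<in>carrier G. \<exists>z\<in>carrier G.
       u4 = inv\<^bsub>G\<^esub> x \<otimes>\<^bsub>G\<^esub> u1 \<otimes>\<^bsub>G\<^esub> x \<otimes>\<^bsub>G\<^esub> inv\<^bsub>G\<^esub> y \<otimes>\<^bsub>G\<^esub> u2 \<otimes>\<^bsub>G\<^esub> y
            \<otimes>\<^bsub>G\<^esub> inv\<^bsub>G\<^esub> z \<otimes>\<^bsub>G\<^esub> u3 \<otimes>\<^bsub>G\<^esub> z))"

definition S4 :: "('a, 'b) monoid_scheme \<Rightarrow> bool" where
  "S4 G \<longleftrightarrow> (\<exists>u1\<in>carrier G. \<exists>u2\<in>carrier G. \<exists>u3\<in>carrier G.
     u1 \<noteq> \<one>\<^bsub>G\<^esub> \<and> u2 \<noteq> \<one>\<^bsub>G\<^esub> \<and> u3 \<noteq> \<one>\<^bsub>G\<^esub> \<and>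
     \<not> (\<exists>x\<in>carrier G. \<exists>y\<in>carrier G.
       u3 = inv\<^bsub>G\<^esub> x \<otimes>\<^bsub>G\<^esub> inv\<^bsub>G\<^esub> u2 \<otimes>\<^bsub>G\<^esub> x \<otimes>\<^bsub>G\<^esub> inv\<^bsub>G\<^esub> y
            \<otimes>\<^bsub>G\<^esub> inv\<^bsub>G\<^esub> u1 \<otimes>\<^bsub>G\<^esub> y))"

text \<open>H = direct sum of copies of G indexed by the integers: finitely supported sequences.\<close>

definition suppH :: "('a, 'b) monoid_scheme \<Rightarrow> (int \<Rightarrow> 'a) \<Rightarrow> int set" where
  "suppH G h = {i. h i \<noteq> \<one>\<^bsub>G\<^esub>}"

definition Hcarrier :: "('a, 'b) monoid_scheme \<Rightarrow> (int \<Rightarrow> 'a) set" where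
  "Hcarrier G = {h. (\<forall>i. h i \<in> carrier G) \<and> finite (suppH G h)}"

definition Hmul :: "('a, 'b) monoid_scheme \<Rightarrow> (int \<Rightarrow> 'a) \<Rightarrow> (int \<Rightarrow> 'a) \<Rightarrow> (int \<Rightarrow> 'a)" where
  "Hmul G g h = (\<lambda>i. g i \<otimes>\<^bsub>G\<^esub> h i)"

definition Hinv :: "('a, 'b) monoid_scheme \<Rightarrow> (int \<Rightarrow> 'a) \<Rightarrow> (int \<Rightarrow> 'a)" where
  "Hinv G g = (\<lambda>i. inv\<^bsub>G\<^esub> (g i))"

definition shift :: "(int \<Rightarrow> 'a) \<Rightarrow> (int \<Rightarrow> 'a)" where
  "shift h = (\<lambda>i. h (i + 1))"

definition pm_t_commutator :: "('a, 'b) monoid_scheme \<Rightarrow> (int \<Rightarrow> 'a) \<Rightarrow> bool" where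
  "pm_t_commutator G h \<longleftrightarrow> (\<exists>g1\<in>Hcarrier G. \<exists>g2\<in>Hcarrier G.
     h = Hmul G (Hmul G (Hmul G g1 (shift (Hinv G g1))) (shift g2)) (Hinv G g2) \<or>
     h = Hmul G (Hmul G (Hmul G (shift g1) (Hinv G g1)) g2) (shift (Hinv G g2)))"

end

theory Submission
  imports Defs
begin

text \<open>
  If \<open>x\<close> and \<open>d\<close> satisfy \<open>d\<^sub>i\<^sub>+\<^sub>1 = x\<^sub>i\<inverse> h\<^sub>i x\<^sub>i d\<^sub>i\<close>, then \<open>h\<^sub>i = x\<^sub>i x\<^sub>i\<^sub>+\<^sub>1\<inverse> (x\<^sub>i\<^sub>+\<^sub>1 d\<^sub>i\<^sub>+\<^sub>1) (x\<^sub>i d\<^sub>i)\<inverse>\<close>,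
  so \<open>h\<close> is a \<open>[\<plusminus>,t]\<close>-commutator with \<open>g\<^sub>1 = x\<close>, \<open>g\<^sub>2 = x d\<close>, provided \<open>d\<close> is finitely
  supported. Starting from \<open>d = 1\<close> left of the support of \<open>h\<close>, this means: some ordered product
  of conjugates of the nontrivial entries of \<open>h\<close> is trivial.
  By (S3) every nontrivial element is a product of conjugates of three given nontrivial
  elements, and (S1) with (S3) leaves no nontrivial central element, so the conjugates of the
  remaining (at least one) entries can be chosen with nontrivial product \<open>q\<close>; the first three
  entries then produce \<open>q\<inverse>\<close>.
\<close>

primrec conj_products :: "('a, 'b) monoid_scheme \<Rightarrow> 'a list \<Rightarrow> 'a set" where
  "conj_products G [] = {\<one>\<^bsub>G\<^esub>}"
| "conj_products G (u # us) =
     {inv\<^bsub>G\<^esub> y \<otimes>\<^bsub>G\<^esub> u \<otimes>\<^bsub>G\<^esub> y \<otimes>\<^bsub>G\<^esub> p | y p. y \<in> carrier G \<and> p \<in> conj_products G us}"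

definition conj_seq :: "('a, 'b) monoid_scheme \<Rightarrow> (int \<Rightarrow> 'a) \<Rightarrow> (int \<Rightarrow> 'a) \<Rightarrow> int \<Rightarrow> 'a" where
  "conj_seq G h x j = inv\<^bsub>G\<^esub> (x j) \<otimes>\<^bsub>G\<^esub> h j \<otimes>\<^bsub>G\<^esub> x j"

context group
begin

lemma conj_products_closed: "set us \<subseteq> carrier G \<Longrightarrow> conj_products G us \<subseteq> carrier G"
  by (induction us) auto

lemma conj_products_ConsI:
  "y \<in> carrier G \<Longrightarrow> p \<in> conj_products G us \<Longrightarrow> inv y \<otimes> u \<otimes> y \<otimes> p \<in> conj_products G (u # us)"
  by auto

lemma conj_products_append:
  assumes "set us \<subseteq> carrier G" "set vs \<subseteq> carrier G"
    and "p \<in> conj_products G us" "q \<in> conj_products G vs"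
  shows "p \<otimes> q \<in> conj_products G (us @ vs)"
  using assms(1,3)
proof (induction us arbitrary: p)
  case Nil
  have "q \<in> carrier G" using assms(2,4) conj_products_closed by blast
  then show ?case using Nil assms(4) by simp
next
  case (Cons u us)
  then obtain y p' where y: "y \<in> carrier G" and p': "p' \<in> conj_products G us"
    and p: "p = inv y \<otimes> u \<otimes> y \<otimes> p'" by auto
  have "p' \<in> carrier G" "q \<in> carrier G"
    using p' Cons.prems assms(2,4) conj_products_closed by auto
  then have "p \<otimes> q = inv y \<otimes> u \<otimes> y \<otimes> (p' \<otimes> q)"
    using p y Cons.prems by (simp add: m_assoc)
  then show ?case using Cons p' y by auto
qed

lemma conj_products_filter_one:
  "set us \<subseteq> carrier G \<Longrightarrow> conj_products G (filter (\<lambda>u. u \<noteq> \<one>) us) \<subseteq> conj_products G us"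
proof (induction us)
  case (Cons u us)
  show ?case
  proof (cases "u = \<one>")
    case True
    show ?thesis
    proof
      fix p assume "p \<in> conj_products G (filter (\<lambda>u. u \<noteq> \<one>) (u # us))"
      with True Cons have p: "p \<in> conj_products G us" by auto
      then have "inv \<one> \<otimes> u \<otimes> \<one> \<otimes> p \<in> conj_products G (u # us)"
        by (rule conj_products_ConsI[OF one_closed])
      moreover have "p \<in> carrier G" using p Cons.prems conj_products_closed by auto
      ultimately show "p \<in> conj_products G (u # us)" using True by simp
    qed
  qed (use Cons in auto)
qed simp

lemma conj_products_three:
  assumes "S3 G" and u: "u1 \<in> carrier G - {\<one>}" "u2 \<in> carrier G - {\<one>}" "u3 \<in> carrier G - {\<one>}"
    and t: "t \<in> carrier G - {\<one>}"
  shows "t \<in> conj_products G [u1, u2, u3]"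
proof -
  obtain x y z where xyz: "x \<in> carrier G" "y \<in> carrier G" "z \<in> carrier G"
    and t_eq: "t = inv x \<otimes> u1 \<otimes> x \<otimes> inv y \<otimes> u2 \<otimes> y \<otimes> inv z \<otimes> u3 \<otimes> z"
    using \<open>S3 G\<close>[unfolded S3_def, rule_format, of u1 u2 u3 t] u t by blast
  have "inv x \<otimes> u1 \<otimes> x \<otimes> (inv y \<otimes> u2 \<otimes> y \<otimes> (inv z \<otimes> u3 \<otimes> z \<otimes> \<one>))
      \<in> conj_products G [u1, u2, u3]"
    using xyz by (intro conj_products_ConsI) auto
  moreover have "inv x \<otimes> u1 \<otimes> x \<otimes> (inv y \<otimes> u2 \<otimes> y \<otimes> (inv z \<otimes> u3 \<otimes> z \<otimes> \<one>)) = t"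
    using xyz u t_eq by (simp add: m_assoc)
  ultimately show ?thesis by simp
qed

lemma S1_commutator:
  assumes "S1 G" "a \<in> carrier G"
  obtains x y where "x \<in> carrier G" "y \<in> carrier G" "a = inv x \<otimes> y \<otimes> x \<otimes> inv y"
proof -
  obtain x y where "x \<in> carrier G" "y \<in> carrier G" "a = inv x \<otimes> inv \<one> \<otimes> y \<otimes> x \<otimes> inv y"
    using assms(1)[unfolded S1_def, rule_format, OF one_closed assms(2)] by blast
  then show thesis using that by simp
qed

lemma nontrivial_not_central:
  assumes "S1 G" "S3 G" and a: "a \<in> carrier G" "a \<noteq> \<one>"
  shows "\<exists>y\<in>carrier G. inv y \<otimes> a \<otimes> y \<noteq> a"
proof (rule ccontr)
  assume "\<not> ?thesis"
  then have central: "inv y \<otimes> a \<otimes> y = a" if "y \<in> carrier G" for y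
    using that by auto
  have cube: "u = a \<otimes> a \<otimes> a" if "u \<in> carrier G - {\<one>}" for u
  proof -
    have "u \<in> conj_products G [a, a, a]"
      using conj_products_three[OF \<open>S3 G\<close>] a that by auto
    then show ?thesis using central a by (auto simp: m_assoc)
  qed
  \<comment> \<open>so \<open>G = {\<one>, a\<^sup>3}\<close> is abelian, while (S1) makes every element a commutator\<close>
  have comm: "y \<otimes> x = x \<otimes> y" if "x \<in> carrier G" "y \<in> carrier G" for x y
    using that cube by (cases "x = \<one> \<or> y = \<one>") auto
  obtain x y where xy: "x \<in> carrier G" "y \<in> carrier G" and "a = inv x \<otimes> y \<otimes> x \<otimes> inv y"
    using S1_commutator[OF \<open>S1 G\<close> a(1)] .
  then have "a = inv x \<otimes> (x \<otimes> y) \<otimes> inv y"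
    using comm[OF xy] by (simp add: m_assoc)
  also have "\<dots> = \<one>" using xy by (simp add: m_assoc[symmetric])
  finally show False using a(2) by blast
qed

lemma conj_products_nontrivial:
  assumes "S1 G" "S3 G"
  shows "set us \<subseteq> carrier G - {\<one>} \<Longrightarrow> us \<noteq> [] \<Longrightarrow> \<exists>p\<in>conj_products G us. p \<noteq> \<one>"
proof (induction us)
  case (Cons u us)
  then have u: "u \<in> carrier G" "u \<noteq> \<one>" by auto
  show ?case
  proof (cases "us = []")
    case True
    have "inv \<one> \<otimes> u \<otimes> \<one> \<otimes> \<one> \<in> conj_products G (u # us)"
      using True by (intro conj_products_ConsI) auto
    then show ?thesis using u by auto
  next
    case False
    with Cons obtain p where p: "p \<in> conj_products G us" "p \<noteq> \<one>" by auto
    have pc: "p \<in> carrier G" using p Cons.prems conj_products_closed by auto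
    show ?thesis
    proof (cases "u \<otimes> p = \<one>")
      case False
      have "inv \<one> \<otimes> u \<otimes> \<one> \<otimes> p \<in> conj_products G (u # us)"
        using p by (intro conj_products_ConsI) auto
      then show ?thesis using False u pc by auto
    next
      case True
      then have p_inv: "p = inv u" using inv_equality[of p u] inv_comm[of u p] u pc by simp
      obtain y where y: "y \<in> carrier G" "inv y \<otimes> u \<otimes> y \<noteq> u"
        using nontrivial_not_central[OF assms u] by blast
      have "inv y \<otimes> u \<otimes> y \<otimes> p \<noteq> \<one>"
      proof
        assume "inv y \<otimes> u \<otimes> y \<otimes> p = \<one>"
        then have "inv y \<otimes> u \<otimes> y \<otimes> inv u \<otimes> u = u" using u y p_inv by simp
        then show False using u y by (simp add: m_assoc)
      qed
      moreover have "inv y \<otimes> u \<otimes> y \<otimes> p \<in> conj_products G (u # us)"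
        using p y by (intro conj_products_ConsI)
      ultimately show ?thesis by blast
    qed
  qed
qed simp

lemma one_mem_conj_products:
  assumes "S1 G" "S3 G" and us: "set us \<subseteq> carrier G - {\<one>}" "length us \<ge> 4"
  shows "\<one> \<in> conj_products G us"
proof -
  obtain u1 u2 u3 vs where us_eq: "us = [u1, u2, u3] @ vs" and "vs \<noteq> []"
    using us(2) by (auto simp: numeral_eq_Suc Suc_le_length_iff)
  then have u: "u1 \<in> carrier G - {\<one>}" "u2 \<in> carrier G - {\<one>}" "u3 \<in> carrier G - {\<one>}"
    and vs: "set vs \<subseteq> carrier G - {\<one>}"
    using us(1) by auto
  obtain q where q: "q \<in> conj_products G vs" "q \<noteq> \<one>"
    using conj_products_nontrivial[OF assms(1,2) vs \<open>vs \<noteq> []\<close>] by blast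
  have qc: "q \<in> carrier G" using q(1) vs conj_products_closed by blast
  have "inv q \<in> conj_products G [u1, u2, u3]"
    using conj_products_three[OF assms(2) u] qc q(2) by (simp add: inv_eq_1_iff)
  then have "inv q \<otimes> q \<in> conj_products G us"
    unfolding us_eq using u vs q(1) by (intro conj_products_append) auto
  then show ?thesis using qc by simp
qed

lemma conj_seq_closed:
  "(\<And>j. h j \<in> carrier G) \<Longrightarrow> (\<And>j. x j \<in> carrier G) \<Longrightarrow> conj_seq G h x j \<in> carrier G"
  by (simp add: conj_seq_def)

lemma conj_seq_eq_one: "h j = \<one> \<Longrightarrow> x j \<in> carrier G \<Longrightarrow> conj_seq G h x j = \<one>"
  by (simp add: conj_seq_def)

text \<open>The list is reversed because the fold multiplies later positions on the left.\<close>
lemma conj_products_realised: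
  assumes h: "\<And>j. h j \<in> carrier G"
    and "distinct js" "p \<in> conj_products G (rev (map h js))"
  obtains x where "\<And>j. x j \<in> carrier G" "\<And>j. j \<notin> set js \<Longrightarrow> x j = \<one>"
    "foldl (\<lambda>d j. conj_seq G h x j \<otimes> d) \<one> js = p"
proof -
  have "\<exists>x. (\<forall>j. x j \<in> carrier G) \<and> (\<forall>j. j \<notin> set js \<longrightarrow> x j = \<one>) \<and>
      foldl (\<lambda>d j. conj_seq G h x j \<otimes> d) \<one> js = p"
    using assms(2,3)
  proof (induction js arbitrary: p rule: rev_induct)
    case Nil
    then show ?case by (intro exI[of _ "\<lambda>_. \<one>"]) auto
  next
    case (snoc j js)
    then obtain y p' where y: "y \<in> carrier G" and p': "p' \<in> conj_products G (rev (map h js))"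
      and p: "p = inv y \<otimes> h j \<otimes> y \<otimes> p'" by auto
    with snoc obtain x where x: "\<forall>j. x j \<in> carrier G" "\<forall>j. j \<notin> set js \<longrightarrow> x j = \<one>"
      and fold_x: "foldl (\<lambda>d j. conj_seq G h x j \<otimes> d) \<one> js = p'" by auto
    have "j \<notin> set js" using snoc.prems by auto
    then have "foldl (\<lambda>d i. conj_seq G h (x(j := y)) i \<otimes> d) \<one> js = p'"
      using fold_x by (auto simp: conj_seq_def intro: foldl_cong)
    then have "foldl (\<lambda>d i. conj_seq G h (x(j := y)) i \<otimes> d) \<one> (js @ [j]) = p"
      using p by (simp add: conj_seq_def)
    moreover have "\<forall>i. (x(j := y)) i \<in> carrier G"
      and "\<forall>i. i \<notin> set (js @ [j]) \<longrightarrow> (x(j := y)) i = \<one>"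
      using x y by auto
    ultimately show ?case by blast
  qed
  then show thesis using that by blast
qed

lemma foldl_conj_seq_closed:
  assumes "\<And>j. h j \<in> carrier G" "\<And>j. x j \<in> carrier G" "a \<in> carrier G"
  shows "foldl (\<lambda>d j. conj_seq G h x j \<otimes> d) a js \<in> carrier G"
  using assms(3) by (induction js arbitrary: a) (simp_all add: assms conj_seq_closed)

lemma telescoping_sequence:
  assumes h: "\<And>j. h j \<in> carrier G" "\<And>j. j < m \<or> M < j \<Longrightarrow> h j = \<one>"
    and x: "\<And>j. x j \<in> carrier G"
    and total: "foldl (\<lambda>d j. conj_seq G h x j \<otimes> d) \<one> [m..M] = \<one>"
  obtains d where "\<And>i. d i \<in> carrier G" "finite {i. d i \<noteq> \<one>}"
    "\<And>i. d (i + 1) = conj_seq G h x i \<otimes> d i"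
proof
  define d where "d i = foldl (\<lambda>d j. conj_seq G h x j \<otimes> d) \<one> [m..i - 1]" for i
  show d_closed: "d i \<in> carrier G" for i
    unfolding d_def using h x by (intro foldl_conj_seq_closed) auto
  show d_step: "d (i + 1) = conj_seq G h x i \<otimes> d i" for i
  proof (cases "m \<le> i")
    case True
    then have "[m..i] = [m..i - 1] @ [i]" by (simp add: upto_rec2)
    then show ?thesis unfolding d_def by simp
  next
    case False
    then show ?thesis using d_closed h x by (simp add: d_def conj_seq_eq_one)
  qed
  have "d i = \<one>" if "M + 1 \<le> i" for i
    using that
  proof (induction i rule: int_ge_induct)
    case base
    then show ?case using total by (simp add: d_def)
  next
    case (step i)
    then show ?case using h x by (simp add: d_step conj_seq_eq_one)
  qed
  moreover have "d i = \<one>" if "i \<le> m" for i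
    using that by (simp add: d_def)
  ultimately have "{i. d i \<noteq> \<one>} \<subseteq> {m..M}"
    by (smt (verit) atLeastAtMost_iff mem_Collect_eq subsetI)
  then show "finite {i. d i \<noteq> \<one>}" using finite_subset by blast
qed

lemma length_nontrivial_entries:
  assumes "suppH G h \<subseteq> {m..M}"
  shows "length (filter (\<lambda>u. u \<noteq> \<one>) (rev (map h [m..M]))) = card (suppH G h)"
proof -
  have "length (filter (\<lambda>u. u \<noteq> \<one>) (rev (map h [m..M])))
      = length (filter (\<lambda>j. h j \<noteq> \<one>) [m..M])"
    by (simp add: filter_map comp_def flip: rev_filter)
  also have "\<dots> = card (suppH G h \<inter> {m..M})"
    by (simp add: distinct_length_filter suppH_def)
  finally show ?thesis using assms by (simp add: Int_absorb2)
qed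

lemma pm_t_commutator_telescoping:
  assumes x: "x \<in> Hcarrier G" and h: "\<And>j. h j \<in> carrier G"
    and d: "\<And>i. d i \<in> carrier G" "finite {i. d i \<noteq> \<one>}"
    and step: "\<And>i. d (i + 1) = conj_seq G h x i \<otimes> d i"
  shows "pm_t_commutator G h"
proof -
  define g2 where "g2 i = x i \<otimes> d i" for i
  have xc: "x i \<in> carrier G" for i using x by (simp add: Hcarrier_def)
  have "suppH G g2 \<subseteq> suppH G x \<union> {i. d i \<noteq> \<one>}"
    by (auto simp: suppH_def g2_def)
  then have "g2 \<in> Hcarrier G"
    using x d xc by (auto simp: Hcarrier_def g2_def intro: finite_subset)
  moreover have "h = Hmul G (Hmul G (Hmul G x (shift (Hinv G x))) (shift g2)) (Hinv G g2)"
  proof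
    fix i
    have "x i \<otimes> inv (x (i + 1)) \<otimes> (x (i + 1) \<otimes> d (i + 1)) \<otimes> inv (x i \<otimes> d i)
        = x i \<otimes> d (i + 1) \<otimes> inv (d i) \<otimes> inv (x i)"
      using xc d by (simp add: m_assoc inv_mult_group flip: m_assoc[of "inv (x (i + 1))"])
    also have "\<dots> = h i"
      using xc d h by (simp add: step conj_seq_def m_assoc flip: m_assoc[of "x i" "inv (x i)"])
    finally show "h i = Hmul G (Hmul G (Hmul G x (shift (Hinv G x))) (shift g2)) (Hinv G g2) i"
      by (simp add: Hmul_def Hinv_def shift_def g2_def)
  qed
  ultimately show ?thesis using x unfolding pm_t_commutator_def by blast
qed

lemma pm_t_commutator_if_support_ge_4:
  assumes "S1 G" "S3 G" and "h \<in> Hcarrier G" and "card (suppH G h) \<ge> 4"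
  shows "pm_t_commutator G h"
proof -
  have h: "\<And>j. h j \<in> carrier G" and fin: "finite (suppH G h)"
    using assms(3) by (auto simp: Hcarrier_def)
  define m where "m = Min (suppH G h)"
  define M where "M = Max (suppH G h)"
  have supp: "suppH G h \<subseteq> {m..M}"
    using fin by (auto simp: m_def M_def intro: Min_le Max_ge)
  then have h_out: "\<And>j. j < m \<or> M < j \<Longrightarrow> h j = \<one>"
    by (force simp: suppH_def)
  have "\<one> \<in> conj_products G (filter (\<lambda>u. u \<noteq> \<one>) (rev (map h [m..M])))"
    using assms(1,2,4) h length_nontrivial_entries[OF supp] by (intro one_mem_conj_products) auto
  moreover have "set (rev (map h [m..M])) \<subseteq> carrier G" using h by auto
  ultimately have "\<one> \<in> conj_products G (rev (map h [m..M]))"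
    using conj_products_filter_one by blast
  then obtain x where x: "\<And>j. x j \<in> carrier G" "\<And>j. j \<notin> set [m..M] \<Longrightarrow> x j = \<one>"
    and total: "foldl (\<lambda>d j. conj_seq G h x j \<otimes> d) \<one> [m..M] = \<one>"
    by (rule conj_products_realised[OF h distinct_upto]) auto
  have "suppH G x \<subseteq> {m..M}"
    using x(2) by (force simp: suppH_def)
  then have "x \<in> Hcarrier G"
    using x(1) by (auto simp: Hcarrier_def intro: finite_subset)
  moreover obtain d where "\<And>i. d i \<in> carrier G" "finite {i. d i \<noteq> \<one>}"
    "\<And>i. d (i + 1) = conj_seq G h x i \<otimes> d i"
    using telescoping_sequence[OF h h_out x(1) total] by blast
  ultimately show ?thesis using pm_t_commutator_telescoping h by blast
qed

end

theorem lemma4p7: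
  fixes G :: "('a, 'b) monoid_scheme" and h :: "int \<Rightarrow> 'a"
  assumes "group G" and "finite (carrier G)"
    and "S1 G" and "S2 G" and "S3 G" and "S4 G"
    and "h \<in> Hcarrier G" and "card (suppH G h) \<ge> 4"
  shows "pm_t_commutator G h"
  using group.pm_t_commutator_if_support_ge_4[OF assms(1,3,5,7,8)] .

end
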